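(* Let $f:\mathbb R^d\to[0,\infty)$ satisfy the hydrodynamic bounds, let $q>d+\gamma+2s$, $N>0$, $g(v)=N\min(1,|v|^{-q})$, and assume $f\le g$ on $\mathbb R^d$. Then for $|v|\ge2$, $$\mathcal B_{2,q}(f,f)(v)\lesssim \frac{|v|^\gamma}{q-(d+\gamma+2s)}\,g(v).$$
   Context: Fix $d\ge2$, $s\in(0,1)$, $\gamma\in\mathbb R$ with $\gamma+2s\in[0,2]$, and $\tilde b$ smooth with $0<\tilde b_0\le\tilde b\le\tilde b_1$. Hydrodynamic bounds: $m_0\le\int f\le M_0$, $\int f|v|^2\le E_0$, $\int f\ln f\le H_0$. $A\lesssim B$ means $A\le CB$ with $C$ depending only on $d,\gamma,s,\tilde b_0,\tilde b_1,m_0,M_0,E_0,H_0$. Let $c_1(q)=\frac1{20q}$ and $c_3(q)=\frac1{2(1+q)}$. For $v,v',v'_*$ with $(v'-v)\perp(v'_*-v)$ set $v_*=v'+v'_*-v$ and let $\theta$ be the angle between $v-v_*$ and $v'-v'_*$. Define $$\mathcal B_{2,q}(f_1,f_2)(v)=\int_{|v'|<c_3(q)|v|}\frac{f_2(v')-f_2(v)}{|v'-v|^{d+2s}}\int_{v'_*\in v+(v-v')^\perp,\ |v'_*|\ge c_1(q)|v|}f_1(v'_* )|v-v'_*|^{\gamma+2s+1}\tilde b(\cos\theta)\,dv'_*\,dv',$$ the inner integral over the affine hyperplane through $v$ orthogonal to $v-v'$ with $(d-1)$-dimensional Lebesgue measure. *)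

theory Defs
  imports "HOL-Analysis.Analysis"
begin

definition smooth_real :: "(real \<Rightarrow> real) \<Rightarrow> bool" where
  "smooth_real b \<longleftrightarrow> (\<forall>k x. ((deriv ^^ k) b) differentiable (at x))"

definition c1 :: "real \<Rightarrow> real" where "c1 q = 1 / (20 * q)"
definition c3 :: "real \<Rightarrow> real" where "c3 q = 1 / (2 * (1 + q))"

definition gweight :: "real \<Rightarrow> real \<Rightarrow> real^'n \<Rightarrow> real" where
  "gweight N q v = N * (if norm v \<le> 1 then 1 else norm v powr (- q))"

text \<open>(d-1)-dimensional Lebesgue measure on the affine hyperplane through p orthogonal to
  w (w nonzero): pushforward of the Lebesgue measure on the coordinate hyperplane
  {y. y i0 = 0} (product of Lebesgue measures over the other coordinates) under an
  affine isometry x \<mapsto> p + Q x, where Q is an orthogonal matrix sending the i0-th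
  unit vector to w/|w|.  By rotation/translation invariance this does not depend on the
  choices made.\<close>
definition hyp_index :: "'n::finite" where "hyp_index = (SOME i. True)"

definition hyp_rot :: "real^'n \<Rightarrow> real^'n^'n" where
  "hyp_rot w = (SOME Q. orthogonal_matrix Q \<and> Q *v axis hyp_index 1 = w /\<^sub>R norm w)"

definition hyperplane_measure :: "real^'n \<Rightarrow> real^'n \<Rightarrow> (real^'n) measure" where
  "hyperplane_measure p w =
     distr (Pi\<^sub>M (UNIV - {hyp_index}) (\<lambda>_. lborel)) borel
       (\<lambda>y. p + hyp_rot w *v (\<chi> j. if j = hyp_index then 0 else y j))"

definition cos_angle :: "real^'n \<Rightarrow> real^'n \<Rightarrow> real" where
  "cos_angle a b = (a \<bullet> b) / (norm a * norm b)"

definition B2q :: "real \<Rightarrow> real \<Rightarrow> real \<Rightarrow> (real \<Rightarrow> real) \<Rightarrow>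
    (real^'n \<Rightarrow> real) \<Rightarrow> (real^'n \<Rightarrow> real) \<Rightarrow> real^'n \<Rightarrow> real" where
  "B2q q \<gamma> s bt f1 f2 v =
     (\<integral>v'. indicator {v'. norm v' < c3 q * norm v} v' *
        ((f2 v' - f2 v) / norm (v' - v) powr (real CARD('n) + 2 * s) *
         (\<integral>vs'. indicator {x. norm x \<ge> c1 q * norm v} vs' * f1 vs' *
              norm (v - vs') powr (\<gamma> + 2 * s + 1) *
              bt (cos_angle (v - (v' + vs' - v)) (v' - vs'))
            \<partial>hyperplane_measure v (v - v')))
      \<partial>lborel)"

end

theory Submission
  imports Defs
begin

text \<open>
  Fix v with |v| >= 2 and v' with |v'| < c3(q) |v|.  Every point w of the hyperplane through v
  orthogonal to v - v' satisfies |w|^2 >= (1 - c3) (|v|^2 + |w - v|^2), and (1 - c3)^(-q/2) <= 2,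
  so f w <= 2N (|v|^2 + |w - v|^2)^(-q/2) there.  Parametrising the hyperplane isometrically by
  R^(d-1), the inner integral is at most a multiple of the integral of (|v|^2 + |y|^2)^(-q/2) |y|^a
  with a = gamma + 2s + 1.  Bounding |y|^a by a multiple of the sum of the |y_i|^a and integrating
  one coordinate at a time, the weighted coordinate contributes 2 / (q - 1 - a) and each of the
  others a factor 2r / (r - 1), with r dropping by one at every step; these factors telescope, so
  the inner integral is O(|v|^(-eps) / eps) with eps = q - (d + gamma + 2s).  In the outer integral
  |v' - v| >= |v| / 2, and dropping - f v leaves the mass of f, which gives
  O(M0 |v|^(-d-2s-eps) / eps) = O(M0 |v|^gamma |v|^(-q) / eps).
\<close>

section \<open>One-dimensional integrals\<close>

lemma nn_integral_powr_atLeast: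
  fixes c e :: real
  assumes "0 < c" "e < -1"
  shows "(\<integral>\<^sup>+t. ennreal (t powr e) * indicator {c..} t \<partial>lborel)
      = ennreal (c powr (e + 1) / - (e + 1))"
proof -
  have "(\<integral>\<^sup>+t. ennreal (t powr e) * indicator {c..} t \<partial>lborel)
      = ennreal (0 - c powr (e + 1) / (e + 1))"
  proof (rule nn_integral_FTC_atLeast)
    show "((\<lambda>t. t powr (e + 1) / (e + 1)) has_real_derivative x powr e) (at x)" if "c \<le> x" for x
      using that assms by (auto intro!: derivative_eq_intros)
    show "((\<lambda>t. t powr (e + 1) / (e + 1)) \<longlongrightarrow> 0) at_top"
      using assms by (auto intro!: tendsto_divide_zero tendsto_neg_powr filterlim_ident)
  qed auto
  then show ?thesis using assms by (simp add: field_simps)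
qed

lemma nn_integral_even_le:
  fixes g h :: "real \<Rightarrow> ennreal"
  assumes [measurable]: "h \<in> borel_measurable borel"
    and even: "\<And>t. g (- t) = g t" and le: "\<And>t. 0 \<le> t \<Longrightarrow> g t \<le> h t"
  shows "(\<integral>\<^sup>+t. g t \<partial>lborel) \<le> 2 * (\<integral>\<^sup>+t. h t \<partial>lborel)"
proof -
  have "g t \<le> h t + h (- t)" for t
    using le[of t] le[of "- t"] even[of t]
    by (cases "0 \<le> t") (auto intro: add_increasing add_increasing2)
  then have "(\<integral>\<^sup>+t. g t \<partial>lborel) \<le> (\<integral>\<^sup>+t. h t \<partial>lborel) + (\<integral>\<^sup>+t. h (- t) \<partial>lborel)"
    by (subst nn_integral_add[symmetric]) (auto intro!: nn_integral_mono)
  also have "(\<integral>\<^sup>+t. h (- t) \<partial>lborel) = (\<integral>\<^sup>+t. h t \<partial>lborel)"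
    using nn_integral_real_affine[of h "-1" 0] by simp
  finally show ?thesis by (simp add: mult_2)
qed

lemma powr_half_power2: "0 \<le> t \<Longrightarrow> (t\<^sup>2) powr (e / 2) = t powr e" for t :: real
  by (simp add: power2_eq_square powr_mult flip: powr_add)

lemma nn_integral_shifted_square_powr_le:
  fixes B r :: real
  assumes B: "0 < B" and r: "1 < r"
  shows "(\<integral>\<^sup>+t. ennreal ((B + t\<^sup>2) powr (- r / 2)) \<partial>lborel)
      \<le> ennreal (2 * r / (r - 1) * B powr ((1 - r) / 2))"
proof -
  define c where "c = sqrt B"
  have c: "0 < c" "c\<^sup>2 = B" using B by (auto simp: c_def)
  define h where
    "h t = ennreal (B powr (- r / 2)) * indicator {0..c} t + ennreal (t powr (- r)) * indicator {c..} t"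
    for t
  have "(\<integral>\<^sup>+t. ennreal ((B + t\<^sup>2) powr (- r / 2)) \<partial>lborel) \<le> 2 * (\<integral>\<^sup>+t. h t \<partial>lborel)"
  proof (rule nn_integral_even_le)
    show "ennreal ((B + t\<^sup>2) powr (- r / 2)) \<le> h t" if "0 \<le> t" for t
    proof (cases "t \<le> c")
      case True
      then have "(B + t\<^sup>2) powr (- r / 2) \<le> B powr (- r / 2)"
        using r B by (intro powr_mono2') auto
      then have "ennreal ((B + t\<^sup>2) powr (- r / 2))
          \<le> ennreal (B powr (- r / 2)) * indicator {0..c} t"
        using True that by (simp add: ennreal_leI)
      then show ?thesis unfolding h_def by (rule add_increasing2[rotated]) simp
    next
      case False
      have "(B + t\<^sup>2) powr (- r / 2) \<le> (t\<^sup>2) powr (- r / 2)"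
        using r B False c by (intro powr_mono2') auto
      then have "(B + t\<^sup>2) powr (- r / 2) \<le> t powr (- r)"
        using that powr_half_power2[of t "- r"] by simp
      then have "ennreal ((B + t\<^sup>2) powr (- r / 2)) \<le> ennreal (t powr (- r)) * indicator {c..} t"
        using False by (simp add: ennreal_leI)
      then show ?thesis unfolding h_def by (rule add_increasing[rotated]) simp
    qed
  qed (simp_all add: h_def)
  also have "(\<integral>\<^sup>+t. h t \<partial>lborel)
      = ennreal (B powr (- r / 2) * c) + ennreal (c powr (1 - r) / (r - 1))"
    using c r unfolding h_def
    by (subst nn_integral_add)
      (auto simp: nn_integral_cmult_indicator nn_integral_powr_atLeast ennreal_mult)
  also have "\<dots> = ennreal (r / (r - 1) * B powr ((1 - r) / 2))"
  proof -
    have "c = B powr (1 / 2)" and "c powr (1 - r) = B powr ((1 - r) / 2)"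
      using B by (auto simp: c_def powr_half_sqrt[symmetric] powr_powr)
    then have "B powr (- r / 2) * c + c powr (1 - r) / (r - 1)
        = B powr ((1 - r) / 2) * (1 + 1 / (r - 1))"
      by (simp add: powr_add[symmetric] field_simps)
    also have "\<dots> = r / (r - 1) * B powr ((1 - r) / 2)"
      using r by (simp add: field_simps)
    finally show ?thesis
      using B c r by (simp flip: ennreal_plus)
  qed
  also have "2 * \<dots> = ennreal (2 * r / (r - 1) * B powr ((1 - r) / 2))"
    using ennreal_mult'[of 2 "r / (r - 1) * B powr ((1 - r) / 2)"] by (simp add: mult.assoc)
  finally show ?thesis .
qed

lemma nn_integral_shifted_square_powr_abs_le:
  fixes B r a :: real
  assumes B: "0 < B" and a: "1 \<le> a" and r: "1 + a < r"
  shows "(\<integral>\<^sup>+t. ennreal ((B + t\<^sup>2) powr (- r / 2) * \<bar>t\<bar> powr a) \<partial>lborel)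
    \<le> ennreal (2 / (r - 1 - a) * B powr ((1 + a - r) / 2))"
proof -
  define p where "p = r - 1 - a"
  have p: "0 < p" using r by (simp add: p_def)
  define h where "h t = ennreal (t * (B + t\<^sup>2) powr (- p / 2 - 1)) * indicator {0..} t" for t
  define F where "F t = - ((B + t\<^sup>2) powr (- p / 2)) / p" for t
  have "(\<integral>\<^sup>+t. ennreal ((B + t\<^sup>2) powr (- r / 2) * \<bar>t\<bar> powr a) \<partial>lborel) \<le> 2 * (\<integral>\<^sup>+t. h t \<partial>lborel)"
  proof (rule nn_integral_even_le)
    show "ennreal ((B + t\<^sup>2) powr (- r / 2) * \<bar>t\<bar> powr a) \<le> h t" if t: "0 \<le> t" for t
    proof -
      \<comment> \<open>bounding \<open>t powr (a - 1)\<close> by \<open>(B + t\<^sup>2) powr ((a - 1) / 2)\<close> leaves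
        an exact derivative\<close>
      have "t powr (a - 1) = (t\<^sup>2) powr ((a - 1) / 2)"
        using t by (simp add: powr_half_power2)
      also have "\<dots> \<le> (B + t\<^sup>2) powr ((a - 1) / 2)"
        using a B by (intro powr_mono2) auto
      finally have "t powr (a - 1) * t \<le> (B + t\<^sup>2) powr ((a - 1) / 2) * t"
        using t by (rule mult_right_mono)
      moreover have "t powr a = t powr (a - 1) * t"
        using a t by (cases "t = 0") (simp_all add: powr_diff)
      ultimately have "(B + t\<^sup>2) powr (- r / 2) * t powr a
          \<le> (B + t\<^sup>2) powr (- r / 2) * ((B + t\<^sup>2) powr ((a - 1) / 2) * t)"
        by (simp add: mult_left_mono)
      also have "\<dots> = t * (B + t\<^sup>2) powr (- r / 2 + (a - 1) / 2)"
        unfolding powr_add by (simp add: mult_ac)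
      also have "- r / 2 + (a - 1) / 2 = - p / 2 - 1"
        by (simp add: p_def field_simps)
      finally show ?thesis using t by (simp add: h_def ennreal_leI)
    qed
    show "h \<in> borel_measurable borel"
      unfolding h_def by measurable
    show "ennreal ((B + (- t)\<^sup>2) powr (- r / 2) * \<bar>- t\<bar> powr a)
        = ennreal ((B + t\<^sup>2) powr (- r / 2) * \<bar>t\<bar> powr a)" for t
      by simp
  qed
  also have "(\<integral>\<^sup>+t. h t \<partial>lborel) = ennreal (0 - F 0)"
    unfolding h_def
  proof (rule nn_integral_FTC_atLeast)
    show "(F has_real_derivative t * (B + t\<^sup>2) powr (- p / 2 - 1)) (at t)" for t
      unfolding F_def using B p
      by (auto intro!: derivative_eq_intros simp: add_pos_nonneg field_simps)
    have "filterlim (\<lambda>t::real. B + t\<^sup>2) at_top at_top"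
      by (intro filterlim_tendsto_add_at_top[OF tendsto_const] filterlim_pow_at_top filterlim_ident)
        simp
    then show "(F \<longlongrightarrow> 0) at_top"
      unfolding F_def using p tendsto_neg_powr[of "- p / 2"]
      by (auto intro!: tendsto_divide_zero tendsto_minus_cancel_left[THEN iffD1])
  qed (use B in \<open>auto simp: add_pos_nonneg\<close>)
  also have "2 * ennreal (0 - F 0) = ennreal (2 / (r - 1 - a) * B powr ((1 + a - r) / 2))"
    using ennreal_mult'[of 2 "B powr (- p / 2) / p"] by (simp add: F_def p_def field_simps)
  finally show ?thesis .
qed

section \<open>Integrals over \<open>\<real>\<^sup>I\<close>\<close>

lemma sum_squares_insert_fun_upd:
  fixes x :: "'i \<Rightarrow> real"
  assumes "finite I" "i \<notin> I"
  shows "(\<Sum>j\<in>insert i I. ((x(i := t)) j)\<^sup>2) = t\<^sup>2 + (\<Sum>j\<in>I. (x j)\<^sup>2)"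
proof -
  have "(\<Sum>j\<in>I. ((x(i := t)) j)\<^sup>2) = (\<Sum>j\<in>I. (x j)\<^sup>2)"
    using assms by (intro sum.cong) auto
  then show ?thesis using assms by simp
qed

lemma nn_integral_PiM_shifted_powr_le:
  fixes I :: "'i set" and B r :: real
  assumes "finite I" "0 < B" "real (card I) < r"
  shows "(\<integral>\<^sup>+y. ennreal ((B + (\<Sum>j\<in>I. (y j)\<^sup>2)) powr (- r / 2)) \<partial>Pi\<^sub>M I (\<lambda>_. lborel))
    \<le> ennreal (2 ^ card I * r / (r - card I) * B powr ((card I - r) / 2))"
  using assms
proof (induction I arbitrary: B r rule: finite_induct)
  case empty
  then show ?case by (simp add: PiM_empty nn_integral_count_space_finite)
next
  case (insert i I)
  interpret product_sigma_finite "\<lambda>_::'i. lborel :: real measure" by standard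
  have B: "0 < B" and r: "real (card I) + 1 < r" and card: "card (insert i I) = Suc (card I)"
    using insert by auto
  have "(\<integral>\<^sup>+y. ennreal ((B + (\<Sum>j\<in>insert i I. (y j)\<^sup>2)) powr (- r / 2)) \<partial>Pi\<^sub>M (insert i I) (\<lambda>_. lborel))
      = (\<integral>\<^sup>+x. (\<integral>\<^sup>+t. ennreal ((B + (\<Sum>j\<in>insert i I. ((x(i := t)) j)\<^sup>2)) powr (- r / 2))
          \<partial>lborel) \<partial>Pi\<^sub>M I (\<lambda>_. lborel))"
    using insert.hyps by (intro product_nn_integral_insert) (auto intro!: measurable_PiM_single')
  also have "\<dots> = (\<integral>\<^sup>+x. (\<integral>\<^sup>+t. ennreal (((B + (\<Sum>j\<in>I. (x j)\<^sup>2)) + t\<^sup>2) powr (- r / 2)) \<partial>lborel)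
      \<partial>Pi\<^sub>M I (\<lambda>_. lborel))"
    by (simp only: sum_squares_insert_fun_upd[OF insert.hyps]) (simp add: add_ac)
  also have "\<dots> \<le> (\<integral>\<^sup>+x. ennreal (2 * r / (r - 1) * (B + (\<Sum>j\<in>I. (x j)\<^sup>2)) powr ((1 - r) / 2))
      \<partial>Pi\<^sub>M I (\<lambda>_. lborel))"
    using B r
    by (intro nn_integral_mono nn_integral_shifted_square_powr_le add_pos_nonneg sum_nonneg) auto
  also have "\<dots>
      = ennreal (2 * r / (r - 1))
        * (\<integral>\<^sup>+x. ennreal ((B + (\<Sum>j\<in>I. (x j)\<^sup>2)) powr (- (r - 1) / 2)) \<partial>Pi\<^sub>M I (\<lambda>_. lborel))"
  proof -
    have "ennreal (2 * r / (r - 1) * X) = ennreal (2 * r / (r - 1)) * ennreal X" for X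
      using r by (intro ennreal_mult') simp
    moreover have "(1 - r) / 2 = - (r - 1) / 2" by simp
    ultimately show ?thesis
      using insert.hyps
      by (simp only:) (intro nn_integral_cmult, auto intro!: measurable_PiM_single')
  qed
  also have "\<dots>
      \<le> ennreal (2 * r / (r - 1))
        * ennreal (2 ^ card I * (r - 1) / (r - 1 - card I) * B powr ((card I - (r - 1)) / 2))"
    using B r by (intro mult_left_mono insert.IH) auto
  also have "\<dots>
      = ennreal (2 * r / (r - 1)
        * (2 ^ card I * (r - 1) / (r - 1 - card I) * B powr ((card I - (r - 1)) / 2)))"
    using r by (intro ennreal_mult'[symmetric]) simp
  also have "2 * r / (r - 1)
        * (2 ^ card I * (r - 1) / (r - 1 - card I) * B powr ((card I - (r - 1)) / 2))
      = 2 ^ card (insert i I) * r / (r - card (insert i I)) * B powr ((card (insert i I) - r) / 2)"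
  proof -
    have "r - 1 \<noteq> 0" "r - 1 - card I \<noteq> 0" using r by auto
    then have "2 * r / (r - 1) * (2 ^ card I * (r - 1) / (r - 1 - card I))
        = 2 ^ Suc (card I) * r / (r - 1 - card I)"
      by simp
    also have "\<dots> = 2 ^ card (insert i I) * r / (r - card (insert i I))"
      by (simp add: card diff_diff_eq)
    finally have coeff: "2 * r / (r - 1) * (2 ^ card I * (r - 1) / (r - 1 - card I)) = \<dots>" .
    have expo: "(real (card I) - (r - 1)) / 2 = (real (card (insert i I)) - r) / 2"
      by (simp add: card)
    show ?thesis by (simp only: mult.assoc[symmetric] coeff expo)
  qed
  finally show ?case .
qed

lemma nn_integral_PiM_shifted_powr_coord_le:
  fixes I :: "'i set" and B q a :: real
  assumes I: "finite I" "i \<in> I" and B: "0 < B" and a: "1 \<le> a" and q: "real (card I) + a < q"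
  shows "(\<integral>\<^sup>+y. ennreal ((B + (\<Sum>j\<in>I. (y j)\<^sup>2)) powr (- q / 2) * \<bar>y i\<bar> powr a) \<partial>Pi\<^sub>M I (\<lambda>_. lborel))
    \<le> ennreal (2 ^ card I / (q - card I - a) * B powr ((card I + a - q) / 2))"
proof -
  interpret product_sigma_finite "\<lambda>_::'i. lborel :: real measure" by standard
  define J where "J = I - {i}"
  have J: "finite J" "i \<notin> J" "I = insert i J"
    using I by (auto simp: J_def)
  have card: "card I = Suc (card J)"
    using I by (metis J_def card_Suc_Diff1)
  have "(\<integral>\<^sup>+y. ennreal ((B + (\<Sum>j\<in>I. (y j)\<^sup>2)) powr (- q / 2) * \<bar>y i\<bar> powr a) \<partial>Pi\<^sub>M I (\<lambda>_. lborel))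
      = (\<integral>\<^sup>+x. (\<integral>\<^sup>+t. ennreal ((B + (\<Sum>j\<in>insert i J. ((x(i := t)) j)\<^sup>2)) powr (- q / 2)
          * \<bar>(x(i := t)) i\<bar> powr a) \<partial>lborel) \<partial>Pi\<^sub>M J (\<lambda>_. lborel))"
    unfolding J(3) using J
    by (intro product_nn_integral_insert) (auto intro!: measurable_PiM_single')
  also have "\<dots>
      = (\<integral>\<^sup>+x. (\<integral>\<^sup>+t. ennreal (((B + (\<Sum>j\<in>J. (x j)\<^sup>2)) + t\<^sup>2) powr (- q / 2) * \<bar>t\<bar> powr a)
          \<partial>lborel) \<partial>Pi\<^sub>M J (\<lambda>_. lborel))"
    by (simp only: sum_squares_insert_fun_upd[OF J(1,2)] fun_upd_same) (simp add: add_ac)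
  also have "\<dots> \<le> (\<integral>\<^sup>+x. ennreal (2 / (q - 1 - a) * (B + (\<Sum>j\<in>J. (x j)\<^sup>2)) powr ((1 + a - q) / 2))
      \<partial>Pi\<^sub>M J (\<lambda>_. lborel))"
    using B a q card
    by (intro nn_integral_mono nn_integral_shifted_square_powr_abs_le add_pos_nonneg sum_nonneg)
      auto
  also have "\<dots>
      = ennreal (2 / (q - 1 - a))
        * (\<integral>\<^sup>+x. ennreal ((B + (\<Sum>j\<in>J. (x j)\<^sup>2)) powr (- (q - 1 - a) / 2)) \<partial>Pi\<^sub>M J (\<lambda>_. lborel))"
  proof -
    have "ennreal (2 / (q - 1 - a) * X) = ennreal (2 / (q - 1 - a)) * ennreal X" for X
      using q card by (intro ennreal_mult') simp
    moreover have "(1 + a - q) / 2 = - (q - 1 - a) / 2" by simp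
    ultimately show ?thesis
      using J by (simp only:) (intro nn_integral_cmult, auto intro!: measurable_PiM_single')
  qed
  also have "\<dots>
      \<le> ennreal (2 / (q - 1 - a))
        * ennreal (2 ^ card J * (q - 1 - a) / (q - 1 - a - card J) * B powr ((card J - (q - 1 - a)) / 2))"
    using B q card by (intro mult_left_mono nn_integral_PiM_shifted_powr_le J(1)) auto
  also have "\<dots>
      = ennreal (2 / (q - 1 - a)
        * (2 ^ card J * (q - 1 - a) / (q - 1 - a - card J) * B powr ((card J - (q - 1 - a)) / 2)))"
    using q card by (intro ennreal_mult'[symmetric]) simp
  also have "2 / (q - 1 - a)
        * (2 ^ card J * (q - 1 - a) / (q - 1 - a - card J) * B powr ((card J - (q - 1 - a)) / 2))
      = 2 ^ card I / (q - card I - a) * B powr ((card I + a - q) / 2)"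
  proof -
    have "q - 1 - a \<noteq> 0" using q card by simp
    then have "2 / (q - 1 - a) * (2 ^ card J * (q - 1 - a) / (q - 1 - a - card J))
        = 2 ^ Suc (card J) / (q - 1 - a - card J)"
      by simp
    also have "\<dots> = 2 ^ card I / (q - card I - a)"
      by (simp add: card algebra_simps)
    finally have coeff: "2 / (q - 1 - a) * (2 ^ card J * (q - 1 - a) / (q - 1 - a - card J)) = \<dots>" .
    have expo: "(real (card J) - (q - 1 - a)) / 2 = (real (card I) + a - q) / 2"
      by (simp add: card)
    show ?thesis by (simp only: mult.assoc[symmetric] coeff expo)
  qed
  finally show ?thesis .
qed

lemma sum_squares_powr_le:
  fixes y :: "'i \<Rightarrow> real"
  assumes I: "finite I" "I \<noteq> {}" and a: "0 < a"
  shows "(\<Sum>j\<in>I. (y j)\<^sup>2) powr (a / 2) \<le> real (card I) powr (a / 2) * (\<Sum>j\<in>I. \<bar>y j\<bar> powr a)"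
proof -
  have "Max ((\<lambda>j. \<bar>y j\<bar>) ` I) \<in> (\<lambda>j. \<bar>y j\<bar>) ` I"
    using I by (intro Max_in) auto
  then obtain i where i: "i \<in> I" and i_max: "\<bar>y i\<bar> = Max ((\<lambda>j. \<bar>y j\<bar>) ` I)"
    by auto
  have max: "\<bar>y j\<bar> \<le> \<bar>y i\<bar>" if "j \<in> I" for j
    unfolding i_max using I that by (intro Max_ge) auto
  have "(\<Sum>j\<in>I. (y j)\<^sup>2) \<le> (\<Sum>j\<in>I. \<bar>y i\<bar>\<^sup>2)"
    using max by (intro sum_mono) (simp add: abs_le_square_iff)
  then have "(\<Sum>j\<in>I. (y j)\<^sup>2) powr (a / 2) \<le> (real (card I) * \<bar>y i\<bar>\<^sup>2) powr (a / 2)"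
    using a by (intro powr_mono2) (auto intro: sum_nonneg)
  also have "\<dots> = real (card I) powr (a / 2) * \<bar>y i\<bar> powr a"
    using powr_half_power2[of "\<bar>y i\<bar>" a] by (simp add: powr_mult)
  also have "\<dots> \<le> real (card I) powr (a / 2) * (\<Sum>j\<in>I. \<bar>y j\<bar> powr a)"
    using i I by (intro mult_left_mono member_le_sum) auto
  finally show ?thesis .
qed

definition radial_const :: "nat \<Rightarrow> real \<Rightarrow> real \<Rightarrow> real" where
  "radial_const m a q = real m powr (a / 2) * real m * 2 ^ m / (q - real m - a)"

lemma radial_const_nonneg: "real m + a < q \<Longrightarrow> 0 \<le> radial_const m a q"
  by (simp add: radial_const_def)

lemma nn_integral_PiM_shifted_powr_norm_le:
  fixes I :: "'i set" and B q a :: real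
  assumes I: "finite I" "I \<noteq> {}" and B: "0 < B" and a: "1 \<le> a" and q: "real (card I) + a < q"
  shows "(\<integral>\<^sup>+y. ennreal ((B + (\<Sum>j\<in>I. (y j)\<^sup>2)) powr (- q / 2) * (\<Sum>j\<in>I. (y j)\<^sup>2) powr (a / 2))
      \<partial>Pi\<^sub>M I (\<lambda>_. lborel))
    \<le> ennreal (radial_const (card I) a q * B powr ((card I + a - q) / 2))"
proof -
  define c where "c = real (card I) powr (a / 2)"
  define E where "E = 2 ^ card I / (q - card I - a) * B powr ((card I + a - q) / 2)"
  have c: "0 \<le> c" and E: "0 \<le> E" using q by (auto simp: c_def E_def)
  define S where "S y = (\<Sum>j\<in>I. (y j)\<^sup>2)" for y :: "'i \<Rightarrow> real"
  have "(\<integral>\<^sup>+y. ennreal ((B + S y) powr (- q / 2) * S y powr (a / 2)) \<partial>Pi\<^sub>M I (\<lambda>_. lborel))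
      \<le> (\<integral>\<^sup>+y. (\<Sum>i\<in>I. ennreal c * ennreal ((B + S y) powr (- q / 2) * \<bar>y i\<bar> powr a))
        \<partial>Pi\<^sub>M I (\<lambda>_. lborel))"
  proof (intro nn_integral_mono)
    fix y :: "'i \<Rightarrow> real"
    have "(B + S y) powr (- q / 2) * S y powr (a / 2)
        \<le> (B + S y) powr (- q / 2) * (c * (\<Sum>i\<in>I. \<bar>y i\<bar> powr a))"
      using sum_squares_powr_le[OF I, of a y] a by (intro mult_left_mono) (auto simp: S_def c_def)
    also have "\<dots> = (\<Sum>i\<in>I. c * ((B + S y) powr (- q / 2) * \<bar>y i\<bar> powr a))"
      by (simp add: sum_distrib_left sum_distrib_right mult_ac)
    finally show "ennreal ((B + S y) powr (- q / 2) * S y powr (a / 2))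
        \<le> (\<Sum>i\<in>I. ennreal c * ennreal ((B + S y) powr (- q / 2) * \<bar>y i\<bar> powr a))"
      using c by (simp add: ennreal_leI ennreal_mult'[symmetric] sum_nonneg)
  qed
  also have "\<dots>
      = (\<Sum>i\<in>I. ennreal c
          * (\<integral>\<^sup>+y. ennreal ((B + S y) powr (- q / 2) * \<bar>y i\<bar> powr a) \<partial>Pi\<^sub>M I (\<lambda>_. lborel)))"
    using I by (subst nn_integral_sum)
      (auto simp: S_def intro!: sum.cong nn_integral_cmult measurable_PiM_single')
  also have "\<dots> \<le> (\<Sum>i\<in>I. ennreal c * ennreal E)"
    unfolding S_def E_def using I B a q
    by (intro sum_mono mult_left_mono nn_integral_PiM_shifted_powr_coord_le) auto
  also have "\<dots> = ennreal (\<Sum>i\<in>I. c * E)"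
    using c E by (subst sum_ennreal[symmetric]) (auto simp: ennreal_mult')
  also have "(\<Sum>i\<in>I. c * E) = radial_const (card I) a q * B powr ((card I + a - q) / 2)"
    by (simp add: c_def E_def radial_const_def)
  finally show ?thesis unfolding S_def .
qed

section \<open>The hyperplane measure\<close>

definition hyperplane_param :: "real^'n \<Rightarrow> real^'n \<Rightarrow> ('n \<Rightarrow> real) \<Rightarrow> real^'n" where
  "hyperplane_param p w y = p + hyp_rot w *v (\<chi> j. if j = hyp_index then 0 else y j)"

lemma hyperplane_measure_eq_distr:
  "hyperplane_measure p w
      = distr (Pi\<^sub>M (UNIV - {hyp_index}) (\<lambda>_. lborel)) borel (hyperplane_param p w)"
  unfolding hyperplane_measure_def hyperplane_param_def ..

lemma
  fixes w :: "real^'n"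
  assumes "w \<noteq> 0"
  shows orthogonal_matrix_hyp_rot: "orthogonal_matrix (hyp_rot w)"
    and hyp_rot_axis: "hyp_rot w *v axis hyp_index 1 = w /\<^sub>R norm w"
proof -
  have "norm (w /\<^sub>R norm w) = 1" using assms by simp
  then obtain Q :: "real^'n^'n" where "orthogonal_matrix Q" "Q *v axis hyp_index 1 = w /\<^sub>R norm w"
    using orthogonal_matrix_exists_basis by blast
  then have "\<exists>Q. orthogonal_matrix Q \<and> Q *v axis hyp_index 1 = w /\<^sub>R norm w" by blast
  from someI_ex[OF this]
  show "orthogonal_matrix (hyp_rot w)" "hyp_rot w *v axis hyp_index 1 = w /\<^sub>R norm w"
    unfolding hyp_rot_def by auto
qed

lemma orthogonal_matrix_inner:
  fixes Q :: "real^'n^'n"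
  assumes "orthogonal_matrix Q"
  shows "(Q *v x) \<bullet> (Q *v y) = x \<bullet> y"
  using assms orthogonal_transformation_matrix[of "\<lambda>x. Q *v x"]
  by (simp add: orthogonal_transformation_def)

lemma measurable_hyperplane_param:
  "hyperplane_param p w \<in> Pi\<^sub>M (UNIV - {hyp_index}) (\<lambda>_. lborel) \<rightarrow>\<^sub>M borel"
proof -
  have e: "(\<lambda>y. (\<chi> j. if j = hyp_index then 0 else y j) :: real^'n)
      = (\<lambda>y. \<Sum>j\<in>UNIV. (if j = hyp_index then 0 else y j) *\<^sub>R axis j 1)"
    by (rule ext, subst basis_expansion[symmetric]) (simp add: scalar_mult_eq_scaleR)
  have m: "(\<lambda>y. if j = hyp_index then 0 else y j)
      \<in> borel_measurable (Pi\<^sub>M (UNIV - {hyp_index}) (\<lambda>_. lborel))" for j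
    by (cases "j = hyp_index") (auto intro!: measurable_PiM_single')
  have "(\<lambda>y. (\<chi> j. if j = hyp_index then 0 else y j) :: real^'n)
      \<in> borel_measurable (Pi\<^sub>M (UNIV - {hyp_index}) (\<lambda>_. lborel))"
    unfolding e by (intro borel_measurable_sum borel_measurable_scaleR borel_measurable_const m)
  moreover have "(\<lambda>x. p + hyp_rot w *v x) \<in> borel_measurable borel"
    by (intro borel_measurable_continuous_onI continuous_intros)
  ultimately show ?thesis
    unfolding hyperplane_param_def by (rule measurable_compose[where f = "\<lambda>y. \<chi> j. _ y j"])
qed

lemma
  fixes w :: "real^'n"
  assumes "w \<noteq> 0"
  shows inner_hyperplane_param: "(hyperplane_param p w y - p) \<bullet> w = 0"
    and norm_hyperplane_param: "(norm (hyperplane_param p w y - p))\<^sup>2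
        = (\<Sum>j\<in>UNIV - {hyp_index}. (y j)\<^sup>2)"
proof -
  define e :: "real^'n" where "e = (\<chi> j. if j = hyp_index then 0 else y j)"
  have Q: "orthogonal_matrix (hyp_rot w)" and w: "w = norm w *\<^sub>R (hyp_rot w *v axis hyp_index 1)"
    using orthogonal_matrix_hyp_rot[OF assms] hyp_rot_axis[OF assms] assms by auto
  have "(hyperplane_param p w y - p) \<bullet> w
      = norm w * ((hyp_rot w *v e) \<bullet> (hyp_rot w *v axis hyp_index 1))"
    by (subst w) (simp add: hyperplane_param_def e_def)
  also have "\<dots> = 0"
    by (simp add: orthogonal_matrix_inner[OF Q] e_def inner_axis)
  finally show "(hyperplane_param p w y - p) \<bullet> w = 0" .
  have "(norm (hyperplane_param p w y - p))\<^sup>2 = e \<bullet> e"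
    by (simp add: hyperplane_param_def e_def power2_norm_eq_inner orthogonal_matrix_inner[OF Q])
  also have "\<dots> = (\<Sum>j\<in>UNIV. if j = hyp_index then 0 else (y j)\<^sup>2)"
    by (simp add: e_def inner_vec_def power2_eq_square if_distrib cong: if_cong)
  also have "\<dots> = (\<Sum>j\<in>UNIV - {hyp_index}. (y j)\<^sup>2)"
    by (simp add: sum.If_cases Diff_eq)
  finally show "(norm (hyperplane_param p w y - p))\<^sup>2 = (\<Sum>j\<in>UNIV - {hyp_index}. (y j)\<^sup>2)" .
qed

lemma AE_hyperplane_measure:
  fixes w :: "real^'n"
  assumes "w \<noteq> 0"
  shows "AE x in hyperplane_measure p w. (x - p) \<bullet> w = 0"
  unfolding hyperplane_measure_eq_distr
  using inner_hyperplane_param[OF assms]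
  by (subst AE_distr_iff) (auto intro: measurable_hyperplane_param)

lemma nn_integral_hyperplane_measure_radial:
  fixes w :: "real^'n" and h :: "real \<Rightarrow> ennreal"
  assumes "w \<noteq> 0" "h \<in> borel_measurable borel"
  shows "(\<integral>\<^sup>+x. h ((norm (x - p))\<^sup>2) \<partial>hyperplane_measure p w)
    = (\<integral>\<^sup>+y. h (\<Sum>j\<in>UNIV - {hyp_index}. (y j)\<^sup>2) \<partial>Pi\<^sub>M (UNIV - {hyp_index :: 'n}) (\<lambda>_. lborel))"
  unfolding hyperplane_measure_eq_distr using assms
  by (subst nn_integral_distr) (auto intro: measurable_hyperplane_param simp: norm_hyperplane_param)

lemma hyperplane_integral_le:
  fixes p w :: "real^'n" and H :: "real^'n \<Rightarrow> real"
  assumes card: "2 \<le> CARD('n)" and w: "w \<noteq> 0" and B: "0 < B" and a: "1 \<le> a"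
    and q: "real (CARD('n) - 1) + a < q" and K: "0 \<le> K"
    and H: "\<And>x. (x - p) \<bullet> w = 0 \<Longrightarrow>
      H x \<le> K * (B + (norm (x - p))\<^sup>2) powr (- q / 2) * ((norm (x - p))\<^sup>2) powr (a / 2)"
  shows "(\<integral>x. H x \<partial>hyperplane_measure p w)
    \<le> K * radial_const (CARD('n) - 1) a q * B powr ((real (CARD('n) - 1) + a - q) / 2)"
proof -
  define I where "I = UNIV - {hyp_index :: 'n}"
  have "card I = CARD('n) - 1"
    by (simp add: I_def card_Diff_singleton)
  then have I: "finite I" "I \<noteq> {}" "card I = CARD('n) - 1"
    using card by auto
  define C where "C = radial_const (card I) a q"
  have C: "0 \<le> C" using q I by (simp add: C_def radial_const_nonneg)
  define h where "h S = ennreal (K * (B + S) powr (- q / 2) * S powr (a / 2))" for S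
  have "(\<integral>\<^sup>+x. ennreal (H x) \<partial>hyperplane_measure p w)
      \<le> (\<integral>\<^sup>+x. h ((norm (x - p))\<^sup>2) \<partial>hyperplane_measure p w)"
    using AE_hyperplane_measure[OF w, of p]
    by (intro nn_integral_mono_AE, eventually_elim) (unfold h_def, intro ennreal_leI H)
  also have "\<dots> = (\<integral>\<^sup>+y. h (\<Sum>j\<in>I. (y j)\<^sup>2) \<partial>Pi\<^sub>M I (\<lambda>_. lborel))"
    unfolding I_def by (rule nn_integral_hyperplane_measure_radial[OF w]) (unfold h_def, measurable)
  also have "\<dots> = ennreal K * (\<integral>\<^sup>+y. ennreal ((B + (\<Sum>j\<in>I. (y j)\<^sup>2)) powr (- q / 2)
      * (\<Sum>j\<in>I. (y j)\<^sup>2) powr (a / 2)) \<partial>Pi\<^sub>M I (\<lambda>_. lborel))"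
    unfolding h_def using K I
    by (subst nn_integral_cmult[symmetric])
      (auto simp: ennreal_mult' mult.assoc intro!: measurable_PiM_single')
  also have "\<dots> \<le> ennreal K * ennreal (C * B powr ((card I + a - q) / 2))"
    unfolding C_def using I B a q
    by (intro mult_left_mono nn_integral_PiM_shifted_powr_norm_le) auto
  also have "\<dots> = ennreal (K * (C * B powr ((card I + a - q) / 2)))"
    using K by (rule ennreal_mult'[symmetric])
  finally have "(\<integral>x. H x \<partial>hyperplane_measure p w) \<le> K * (C * B powr ((card I + a - q) / 2))"
    using K C B by (intro integral_real_bounded) auto
  then show ?thesis
    by (simp only: C_def I(3) mult.assoc)
qed

section \<open>Bounding \<open>B\<^sub>2\<^sub>,\<^sub>q\<close>\<close>

lemma norm_ge_on_orthogonal_hyperplane: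
  fixes v v' w :: "'a::real_inner"
  assumes h: "(w - v) \<bullet> (v - v') = 0" and v': "norm v' \<le> c * norm v" and c: "0 \<le> c"
  shows "(1 - c) * ((norm v)\<^sup>2 + (norm (w - v))\<^sup>2) \<le> (norm w)\<^sup>2"
proof -
  define z where "z = w - v"
  have "v \<bullet> z = v' \<bullet> z"
    using h by (simp add: z_def inner_diff_left inner_commute)
  also have "\<dots> \<ge> - (norm v' * norm z)"
    using Cauchy_Schwarz_ineq2[of v' z] by linarith
  finally have "v \<bullet> z \<ge> - (c * (norm v * norm z))"
    using mult_right_mono[OF v', of "norm z"] by (simp add: mult.assoc)
  moreover have "2 * (c * (norm v * norm z)) \<le> c * ((norm v)\<^sup>2 + (norm z)\<^sup>2)"
    using c mult_left_mono[OF sum_squares_bound[of "norm v" "norm z"], of c]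
    by (simp add: power2_eq_square algebra_simps)
  moreover have "(norm w)\<^sup>2 = (norm v)\<^sup>2 + 2 * (v \<bullet> z) + (norm z)\<^sup>2"
    by (simp add: z_def power2_norm_eq_inner inner_diff inner_commute algebra_simps)
  ultimately show ?thesis
    unfolding z_def[symmetric] by (simp add: algebra_simps)
qed

lemma c3_pos: "0 < q \<Longrightarrow> 0 < c3 q"
  by (simp add: c3_def)

lemma c3_le_half: "0 < q \<Longrightarrow> c3 q \<le> 1 / 2"
  by (simp add: c3_def field_simps)

lemma one_minus_c3_powr_le:
  assumes q: "0 < q"
  shows "(1 - c3 q) powr (- q / 2) \<le> 2"
proof -
  define c where "c = c3 q"
  have c: "0 < c" "c \<le> 1 / 2" using c3_pos[OF q] c3_le_half[OF q] by (auto simp: c_def)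
  have "- c - 2 * c\<^sup>2 \<le> ln (1 - c)"
    using c by (intro ln_one_minus_pos_lower_bound) auto
  moreover have "2 * c\<^sup>2 \<le> c" using c by (simp add: power2_eq_square)
  ultimately have "- q / 2 * ln (1 - c) \<le> - q / 2 * (- 2 * c)"
    using q by (intro mult_left_mono_neg) auto
  also have "\<dots> \<le> 1 / 2"
    using q by (simp add: c_def c3_def field_simps)
  finally have "(1 - c) powr (- q / 2) \<le> exp (1 / 2)"
    using c by (simp add: powr_def)
  then show ?thesis
    using exp_half_le2 by (simp add: c_def)
qed

lemma gweight_le_on_hyperplane:
  fixes v v' w :: "real^'n"
  assumes h: "(w - v) \<bullet> (v - v') = 0" and v: "2 \<le> norm v" and v': "norm v' < c3 q * norm v"
    and q: "0 < q" and N: "0 \<le> N"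
  shows "gweight N q w \<le> 2 * N * ((norm v)\<^sup>2 + (norm (w - v))\<^sup>2) powr (- q / 2)"
proof -
  define c where "c = c3 q"
  define A where "A = (norm v)\<^sup>2 + (norm (w - v))\<^sup>2"
  have c: "0 < c" "c \<le> 1 / 2" using c3_pos[OF q] c3_le_half[OF q] by (auto simp: c_def)
  have "4 \<le> (norm v)\<^sup>2" using power_mono[OF v, of 2] by simp
  then have A: "4 \<le> A" by (simp add: A_def add_increasing2)
  have w: "(1 - c) * A \<le> (norm w)\<^sup>2"
    unfolding A_def c_def using norm_ge_on_orthogonal_hyperplane[OF h, of c] v' c
    by (simp add: c_def)
  have "2 \<le> (1 - c) * A" using c A mult_mono[of "1/2" "1 - c" 4 A] by simp
  then have "1 < norm w"
    using w by (smt (verit) norm_ge_zero power_le_one)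
  then have "gweight N q w = N * ((norm w)\<^sup>2) powr (- q / 2)"
    using powr_half_power2[of "norm w" "- q"] by (simp add: gweight_def)
  also have "((norm w)\<^sup>2) powr (- q / 2) \<le> ((1 - c) * A) powr (- q / 2)"
    using w c A q by (intro powr_mono2') auto
  also have "\<dots> = (1 - c) powr (- q / 2) * A powr (- q / 2)"
    using c A by (simp add: powr_mult)
  also have "\<dots> \<le> 2 * A powr (- q / 2)"
    using one_minus_c3_powr_le[OF q] by (intro mult_right_mono) (auto simp: c_def)
  finally show ?thesis
    using N by (simp add: A_def mult_left_mono mult.assoc)
qed

lemma cos_angle_bounds: "-1 \<le> cos_angle a b \<and> cos_angle a b \<le> 1"
proof -
  have "\<bar>a \<bullet> b\<bar> \<le> norm a * norm b" by (rule Cauchy_Schwarz_ineq2)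
  then have "\<bar>cos_angle a b\<bar> \<le> 1"
    unfolding cos_angle_def by (cases "norm a * norm b = 0") (auto simp: abs_divide divide_le_eq_1)
  then show ?thesis by (simp add: abs_le_iff)
qed

lemma B2q_inner_integral_le:
  fixes v v' :: "real^'n"
  assumes card: "2 \<le> CARD('n)" and v: "2 \<le> norm v" and v': "norm v' < c3 q * norm v"
    and a: "1 \<le> a" and q: "real (CARD('n) - 1) + a < q" and N: "0 < N"
    and f: "\<forall>x. 0 \<le> f x" "\<forall>x. f x \<le> gweight N q x"
    and bt: "\<forall>x\<in>{-1..1}. 0 \<le> bt x \<and> bt x \<le> b1"
  shows "(\<integral>vs'. indicator {x. norm x \<ge> c1 q * norm v} vs' * f vs' * norm (v - vs') powr a *
              bt (cos_angle (v - (v' + vs' - v)) (v' - vs')) \<partial>hyperplane_measure v (v - v'))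
    \<le> 2 * b1 * N * radial_const (CARD('n) - 1) a q * norm v powr (real (CARD('n) - 1) + a - q)"
proof -
  have q0: "0 < q" using q a by linarith
  have b1: "0 \<le> b1" using bt by force
  have bt_cos: "0 \<le> bt (cos_angle x y) \<and> bt (cos_angle x y) \<le> b1" for x y :: "real^'n"
    using bt cos_angle_bounds[of x y] by auto
  have "norm v' < norm v"
    using v' v c3_le_half[OF q0] mult_right_mono[of "c3 q" "1 / 2" "norm v"] by auto
  then have w: "v - v' \<noteq> 0" by auto
  have "(\<integral>vs'. indicator {x. norm x \<ge> c1 q * norm v} vs' * f vs' * norm (v - vs') powr a *
              bt (cos_angle (v - (v' + vs' - v)) (v' - vs')) \<partial>hyperplane_measure v (v - v'))
    \<le> (2 * b1 * N) * radial_const (CARD('n) - 1) a q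
        * ((norm v)\<^sup>2) powr ((real (CARD('n) - 1) + a - q) / 2)"
  proof (rule hyperplane_integral_le[OF card w _ a q])
    fix x :: "real^'n"
    assume h: "(x - v) \<bullet> (v - v') = 0"
    define P where "P = ((norm (x - v))\<^sup>2) powr (a / 2)"
    define \<beta> where "\<beta> = bt (cos_angle (v - (v' + x - v)) (v' - x))"
    have P: "0 \<le> P" and \<beta>: "0 \<le> \<beta>" "\<beta> \<le> b1"
      using bt_cos by (auto simp: P_def \<beta>_def)
    have "indicator {x. norm x \<ge> c1 q * norm v} x * f x * P * \<beta> \<le> f x * P * b1"
      using f(1) P \<beta> by (simp add: indicator_def mult_left_mono)
    also have "\<dots> \<le> 2 * N * ((norm v)\<^sup>2 + (norm (x - v))\<^sup>2) powr (- q / 2) * P * b1"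
      using f(2) gweight_le_on_hyperplane[OF h v v' q0] N P b1
      by (intro mult_right_mono) (auto intro: order_trans)
    finally show "indicator {x. norm x \<ge> c1 q * norm v} x * f x * norm (v - x) powr a *
        bt (cos_angle (v - (v' + x - v)) (v' - x))
      \<le> 2 * b1 * N * ((norm v)\<^sup>2 + (norm (x - v))\<^sup>2) powr (- q / 2) * ((norm (x - v))\<^sup>2) powr (a / 2)"
      by (simp add: P_def \<beta>_def powr_half_power2 norm_minus_commute mult_ac)
  qed (use v b1 N in auto)
  also have "((norm v)\<^sup>2) powr ((real (CARD('n) - 1) + a - q) / 2)
      = norm v powr (real (CARD('n) - 1) + a - q)"
    by (simp add: powr_half_power2)
  finally show ?thesis .
qed

lemma B2q_outer_integrand_le:
  fixes v v' :: "'a::real_normed_vector"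
  assumes v': "norm v' \<le> norm v / 2" and v: "v \<noteq> 0" and p: "0 \<le> p"
    and f: "0 \<le> f'" "0 \<le> f0" and K: "0 \<le> K" "K \<le> Kmax"
  shows "(f' - f0) / norm (v' - v) powr p * K \<le> f' * ((norm v / 2) powr (- p) * Kmax)"
proof -
  have "norm v / 2 \<le> norm (v' - v)"
    using v' norm_triangle_ineq2[of v v'] by (simp add: norm_minus_commute)
  moreover have "0 < norm v / 2" using v by simp
  ultimately have mono: "(norm v / 2) powr p \<le> norm (v' - v) powr p"
    and pos: "0 < (norm v / 2) powr p"
    using p by (auto intro: powr_mono2)
  have "1 / norm (v' - v) powr p \<le> 1 / (norm v / 2) powr p"
    by (intro divide_left_mono mult_pos_pos; use mono pos in linarith)
  then have dist: "1 / norm (v' - v) powr p \<le> (norm v / 2) powr (- p)"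
    by (simp add: powr_minus_divide)
  have "(f' - f0) / norm (v' - v) powr p * K \<le> f' / norm (v' - v) powr p * K"
    using f K by (simp add: divide_right_mono mult_right_mono)
  also have "\<dots> = f' * (1 / norm (v' - v) powr p) * K" by simp
  also have "\<dots> \<le> f' * (norm v / 2) powr (- p) * Kmax"
    using f dist K by (intro mult_mono mult_left_mono) auto
  finally show ?thesis by (simp add: mult.assoc)
qed

lemma integral_le_times_bound:
  fixes F f :: "'a \<Rightarrow> real"
  assumes f: "integrable M f" "\<And>x. 0 \<le> f x" "(\<integral>x. f x \<partial>M) \<le> c"
    and X: "0 \<le> X" and F: "\<And>x. F x \<le> f x * X"
  shows "(\<integral>x. F x \<partial>M) \<le> c * X"
proof (cases "integrable M F")
  case True
  then have "(\<integral>x. F x \<partial>M) \<le> (\<integral>x. f x * X \<partial>M)"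
    using f F by (intro integral_mono) auto
  also have "\<dots> \<le> c * X" using f X by (simp add: mult_right_mono)
  finally show ?thesis .
next
  case False
  have "0 \<le> (\<integral>x. f x \<partial>M)" using f by simp
  then have "0 \<le> c" using f(3) by linarith
  then show ?thesis using False X by (simp add: not_integrable_integral_eq)
qed

lemma B2q_le:
  fixes f :: "real^'n \<Rightarrow> real" and v :: "real^'n"
  assumes card: "2 \<le> CARD('n)" and s: "0 < s" and \<gamma>: "0 \<le> \<gamma> + 2 * s"
    and bt: "\<forall>x\<in>{-1..1}. 0 \<le> bt x \<and> bt x \<le> b1"
    and f: "\<forall>x. 0 \<le> f x" "\<forall>x. f x \<le> gweight N q x" and f_int: "integrable lborel f"
    and M0: "(\<integral>x. f x \<partial>lborel) \<le> M0"
    and q: "real CARD('n) + \<gamma> + 2 * s < q" and N: "0 < N" and v: "2 \<le> norm v"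
  shows "B2q q \<gamma> s bt f f v
    \<le> M0 * 2 powr (real CARD('n) + 2 * s) * 2 * b1
        * real (CARD('n) - 1) powr ((\<gamma> + 2 * s + 1) / 2) * real (CARD('n) - 1) * 2 ^ (CARD('n) - 1)
        * norm v powr \<gamma> / (q - (real CARD('n) + \<gamma> + 2 * s)) * gweight N q v"
proof -
  define m where "m = CARD('n) - 1"
  define a where "a = \<gamma> + 2 * s + 1"
  define p where "p = real CARD('n) + 2 * s"
  define \<epsilon> where "\<epsilon> = q - (real CARD('n) + \<gamma> + 2 * s)"
  have m: "real m = real CARD('n) - 1" using card by (simp add: m_def of_nat_diff)
  have \<epsilon>: "0 < \<epsilon>" "q - real m - a = \<epsilon>" "real m + a - q = - \<epsilon>"
    using q by (simp_all add: \<epsilon>_def m a_def)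
  have a: "1 \<le> a" using \<gamma> by (simp add: a_def)
  have q0: "0 < q" using \<epsilon> a by simp
  have b1: "0 \<le> b1" using bt by force
  define Kmax where "Kmax = 2 * b1 * N * radial_const m a q * norm v powr (- \<epsilon>)"
  have Kmax: "0 \<le> Kmax" using b1 N \<epsilon> by (simp add: Kmax_def radial_const_nonneg)
  define K where "K v' = (\<integral>vs'. indicator {x. norm x \<ge> c1 q * norm v} vs' * f vs' * norm (v - vs') powr a *
      bt (cos_angle (v - (v' + vs' - v)) (v' - vs')) \<partial>hyperplane_measure v (v - v'))" for v'
  have K: "0 \<le> K v'" "K v' \<le> Kmax" if v': "norm v' < c3 q * norm v" for v'
  proof -
    have "0 \<le> bt (cos_angle x y)" for x y :: "real^'n"
      using bt cos_angle_bounds[of x y] by auto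
    then show "0 \<le> K v'"
      unfolding K_def using f(1) by (intro integral_nonneg_AE AE_I2) (simp add: indicator_def)
    have "real (CARD('n) - 1) + a < q" using \<epsilon> by (simp add: m_def)
    from B2q_inner_integral_le[OF card v v' a this N f bt, folded m_def]
    show "K v' \<le> Kmax"
      unfolding K_def Kmax_def \<epsilon>(3) .
  qed
  define X where "X = (norm v / 2) powr (- p) * Kmax"
  have "B2q q \<gamma> s bt f f v
      = (\<integral>v'. indicator {v'. norm v' < c3 q * norm v} v' * ((f v' - f v) / norm (v' - v) powr p * K v')
          \<partial>lborel)"
    unfolding B2q_def K_def p_def a_def ..
  also have "\<dots> \<le> M0 * X"
  proof (rule integral_le_times_bound[OF f_int _ M0])
    show "0 \<le> X" using Kmax by (simp add: X_def)
    show "indicator {v'. norm v' < c3 q * norm v} v' * ((f v' - f v) / norm (v' - v) powr p * K v')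
        \<le> f v' * X"
      for v'
    proof (cases "norm v' < c3 q * norm v")
      case True
      then have "norm v' \<le> norm v / 2"
        using c3_le_half[OF q0] mult_right_mono[of "c3 q" "1 / 2" "norm v"] by auto
      moreover have "v \<noteq> 0" "0 \<le> p" using v s by (auto simp: p_def)
      ultimately have "(f v' - f v) / norm (v' - v) powr p * K v' \<le> f v' * X"
        unfolding X_def using f(1) K[OF True] by (intro B2q_outer_integrand_le) auto
      then show ?thesis using True by simp
    qed (use f(1) Kmax in \<open>simp add: X_def\<close>)
  qed (use f(1) in simp)
  also have "M0 * X
      = M0 * 2 powr p * 2 * b1 * real m powr (a / 2) * real m * 2 ^ m * norm v powr \<gamma> / \<epsilon>
      * (N * norm v powr (- q))"
  proof -
    have "(norm v / 2) powr (- p) = 2 powr p * norm v powr (- p)"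
      by (simp add: powr_divide powr_minus_divide)
    moreover have "norm v powr (- p) * norm v powr (- \<epsilon>) = norm v powr \<gamma> * norm v powr (- q)"
      by (simp add: p_def \<epsilon>_def flip: powr_add)
    ultimately show ?thesis
      unfolding X_def Kmax_def radial_const_def \<epsilon>(2) by (simp add: field_simps)
  qed
  also have "\<dots>
      = M0 * 2 powr (real CARD('n) + 2 * s) * 2 * b1
        * real (CARD('n) - 1) powr ((\<gamma> + 2 * s + 1) / 2) * real (CARD('n) - 1) * 2 ^ (CARD('n) - 1)
        * norm v powr \<gamma> / (q - (real CARD('n) + \<gamma> + 2 * s)) * gweight N q v"
    using v by (simp add: gweight_def p_def a_def m_def \<epsilon>_def)
  finally show ?thesis .
qed

theorem proposition3p8:
  fixes \<gamma> s b0 b1 m0 M0 E0 H0 :: real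
  assumes "CARD('n::finite) \<ge> 2"
    and "0 < s" and "s < 1"
    and "0 \<le> \<gamma> + 2 * s" and "\<gamma> + 2 * s \<le> 2"
    and "0 < b0" and "b0 \<le> b1"
    and "0 < m0" and "m0 \<le> M0"
  shows "\<exists>C>0. \<forall>(bt::real \<Rightarrow> real) (f::real^'n \<Rightarrow> real) (q::real) (N::real).
    smooth_real bt \<and> (\<forall>x\<in>{-1..1}. b0 \<le> bt x \<and> bt x \<le> b1) \<and>
    f \<in> borel_measurable lborel \<and> (\<forall>v. 0 \<le> f v) \<and>
    integrable lborel f \<and> m0 \<le> (\<integral>v. f v \<partial>lborel) \<and> (\<integral>v. f v \<partial>lborel) \<le> M0 \<and>
    integrable lborel (\<lambda>v. f v * (norm v)\<^sup>2) \<and> (\<integral>v. f v * (norm v)\<^sup>2 \<partial>lborel) \<le> E0 \<and>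
    integrable lborel (\<lambda>v. f v * ln (f v)) \<and> (\<integral>v. f v * ln (f v) \<partial>lborel) \<le> H0 \<and>
    q > real CARD('n) + \<gamma> + 2 * s \<and> N > 0 \<and> (\<forall>v. f v \<le> gweight N q v)
    \<longrightarrow> (\<forall>v::real^'n. norm v \<ge> 2 \<longrightarrow>
          B2q q \<gamma> s bt f f v
            \<le> C * norm v powr \<gamma> / (q - (real CARD('n) + \<gamma> + 2 * s)) * gweight N q v)"
proof -
  define C where "C = M0 * 2 powr (real CARD('n) + 2 * s) * 2 * b1
    * real (CARD('n) - 1) powr ((\<gamma> + 2 * s + 1) / 2) * real (CARD('n) - 1) * 2 ^ (CARD('n) - 1)"
  have "0 < C" using assms by (simp add: C_def)
  moreover have "B2q q \<gamma> s bt f f v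
      \<le> C * norm v powr \<gamma> / (q - (real CARD('n) + \<gamma> + 2 * s)) * gweight N q v"
    if bt: "\<forall>x\<in>{-1..1}. b0 \<le> bt x \<and> bt x \<le> b1"
      and f: "\<forall>x. 0 \<le> f x" "\<forall>x. f x \<le> gweight N q x" "integrable lborel f"
        "(\<integral>x. f x \<partial>lborel) \<le> M0"
      and "real CARD('n) + \<gamma> + 2 * s < q" "0 < N" "2 \<le> norm v"
    for bt f q N and v :: "real^'n"
  proof -
    have "\<forall>x\<in>{-1..1}. 0 \<le> bt x \<and> bt x \<le> b1"
      using bt assms(6) by (auto intro: order_trans[of 0 b0, OF less_imp_le])
    from B2q_le[OF assms(1,2,4) this f that(6-8)] show ?thesis by (simp add: C_def)
  qed
  ultimately show ?thesis by blast
qed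

end
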